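(* Let $c,c':\Delta(S)\to[0,\infty]$ be grounded, convex and lower semi-continuous. The following are equivalent: (a) $c$ is up-shifted from $c'$; (b) for all functions $f,f':S\to\mathbb{R}$ such that $f-f'$ is increasing, \[ \max_{p\in\Delta(S)}\Big[-c'(p)+\sum_{s}f(s)p(s)\Big]\ \ge\ \max_{p\in\Delta(S)}\Big[-c'(p)+\sum_sf'(s)p(s)\Big] \] implies \[ \max_{p\in\Delta(S)}\Big[-c(p)+\sum_{s}f(s)p(s)\Big]\ \ge\ \max_{p\in\Delta(S)}\Big[-c(p)+\sum_sf'(s)p(s)\Big], \] and the same implication holds with both $\ge$ replaced by $>$.
   Context: $S=\{s_1<s_2<\dots<s_{|S|}\}$ is a finite totally ordered set, $\Delta(S)$ its simplex. "Increasing" means weakly increasing with respect to the order on $S$. For $p,q\in\Delta(S)$, "$p$ FOSD $q$" means $\sum_{s\ge t}p(s)\ge\sum_{s\ge t}q(s)$ for all $t\in S$. Grounded means infimum equal to $0$. $c$ is up-shifted from $c'$ iff for any $p,p'\in\Delta(S)$ there exist $q,q'\in\Delta(S)$ such that $p$ FOSD $q'$, $q$ FOSD $p'$, $\tfrac12p+\tfrac12p'=\tfrac12q+\tfrac12q'$, and $c(q)+c'(q')\le c(p)+c'(p')$. *)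

theory Defs
  imports "HOL-Analysis.Analysis" "HOL-Library.Extended_Real"
begin

text \<open>Elements of the prob_simplex Delta(S) are functions p :: 's => real; cost functions
  Delta(S) -> [0,infinity] are functions into ereal (only their values on the prob_simplex matter).\<close>

definition prob_simplex :: "('s::finite \<Rightarrow> real) set" where
  "prob_simplex = {p. (\<forall>s. 0 \<le> p s) \<and> (\<Sum>s\<in>UNIV. p s) = 1}"

definition fosd :: "('s::{finite,linorder} \<Rightarrow> real) \<Rightarrow> ('s \<Rightarrow> real) \<Rightarrow> bool" where
  "fosd p q \<longleftrightarrow> (\<forall>t. (\<Sum>s\<in>{s. s \<ge> t}. p s) \<ge> (\<Sum>s\<in>{s. s \<ge> t}. q s))"

definition nonneg_cost :: "(('s::finite \<Rightarrow> real) \<Rightarrow> ereal) \<Rightarrow> bool" where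
  "nonneg_cost c \<longleftrightarrow> (\<forall>p\<in>prob_simplex. 0 \<le> c p)"

definition grounded :: "(('s::finite \<Rightarrow> real) \<Rightarrow> ereal) \<Rightarrow> bool" where
  "grounded c \<longleftrightarrow> (INF p\<in>prob_simplex. c p) = 0"

definition convex_cost :: "(('s::finite \<Rightarrow> real) \<Rightarrow> ereal) \<Rightarrow> bool" where
  "convex_cost c \<longleftrightarrow> (\<forall>p\<in>prob_simplex. \<forall>q\<in>prob_simplex. \<forall>t::real. 0 \<le> t \<and> t \<le> 1 \<longrightarrow>
     c (\<lambda>s. t * p s + (1 - t) * q s) \<le> ereal t * c p + ereal (1 - t) * c q)"

definition lsc_cost :: "(('s::finite \<Rightarrow> real) \<Rightarrow> ereal) \<Rightarrow> bool" where
  "lsc_cost c \<longleftrightarrow> (\<forall>p\<in>prob_simplex. \<forall>x::nat \<Rightarrow> ('s \<Rightarrow> real).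
     (\<forall>n. x n \<in> prob_simplex) \<and> x \<longlonglongrightarrow> p \<longrightarrow> c p \<le> liminf (\<lambda>n. c (x n)))"

definition up_shifted :: "(('s::{finite,linorder} \<Rightarrow> real) \<Rightarrow> ereal) \<Rightarrow> (('s \<Rightarrow> real) \<Rightarrow> ereal) \<Rightarrow> bool" where
  "up_shifted c c' \<longleftrightarrow> (\<forall>p\<in>prob_simplex. \<forall>p'\<in>prob_simplex. \<exists>q\<in>prob_simplex. \<exists>q'\<in>prob_simplex.
     fosd p q' \<and> fosd q p' \<and>
     (\<lambda>s. (1/2) * p s + (1/2) * p' s) = (\<lambda>s. (1/2) * q s + (1/2) * q' s) \<and>
     c q + c' q' \<le> c p + c' p')"

text \<open>The value max_{p in Delta(S)} [ -c(p) + sum_s f(s) p(s) ] (written as a supremum; it is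
  attained under the standing hypotheses).\<close>
definition val :: "(('s::finite \<Rightarrow> real) \<Rightarrow> ereal) \<Rightarrow> ('s \<Rightarrow> real) \<Rightarrow> ereal" where
  "val c f = (SUP p\<in>prob_simplex. - c p + ereal (\<Sum>s\<in>UNIV. f s * p s))"

end

theory Submission
  imports Defs
begin

text \<open>
  Both conditions are equivalent to increasing differences of the value function: whenever
  \<open>f - f'\<close> is increasing, \<open>val c f' + val c' f \<le> val c f + val c' f'\<close>. Condition (b) yields this
  after shifting \<open>f\<close> by a constant so that \<open>val c' f = val c' f'\<close>, and it trivially implies (b).

  If \<open>c\<close> is up-shifted from \<open>c'\<close>, take \<open>p\<close> nearly optimal for \<open>(c, f')\<close> and \<open>p'\<close> for \<open>(c', f)\<close>.
  The up-shift \<open>(q, q')\<close> costs no more, and since \<open>q\<close> dominates \<open>p'\<close> stochastically while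
  \<open>q + q' = p + p'\<close>, it earns at least as much against the increasing function \<open>f - f'\<close>
  (summation by parts); so \<open>q\<close> and \<open>q'\<close> witness the inequality for \<open>(c, f)\<close> and \<open>(c', f')\<close>.

  Conversely, if some \<open>(p, p')\<close> had no up-shift, the point \<open>(0, 0, c p + c' p')\<close> would lie outside
  the closure of a convex set of attainable deviations (closedness by compactness of the simplex
  and lower semicontinuity). A separating hyperplane yields payoffs \<open>F\<close> and \<open>H\<close> with \<open>H\<close>
  increasing such that \<open>val c (F + H) + val c' F < val c F + val c' (F + H)\<close>, violating
  increasing differences.
\<close>

abbreviation expect :: "('s::finite \<Rightarrow> real) \<Rightarrow> ('s \<Rightarrow> real) \<Rightarrow> real" where
  "expect f p \<equiv> \<Sum>s\<in>UNIV. f s * p s"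

lemma prob_simplex_nonempty: "(prob_simplex :: ('s::finite \<Rightarrow> real) set) \<noteq> {}"
proof -
  have "(\<lambda>_::'s. 1 / real CARD('s)) \<in> prob_simplex"
    by (simp add: prob_simplex_def)
  then show ?thesis by blast
qed

lemma prob_simplex_le_one: "p \<in> prob_simplex \<Longrightarrow> p s \<le> 1"
  using member_le_sum[of s UNIV p] by (simp add: prob_simplex_def)

lemma prob_simplex_convex_combination:
  assumes "q1 \<in> prob_simplex" "q2 \<in> prob_simplex" "0 \<le> u" "u \<le> 1"
  shows "(\<lambda>s. (1 - u) * q1 s + u * q2 s) \<in> prob_simplex"
proof -
  have "(\<Sum>s\<in>UNIV. (1 - u) * q1 s + u * q2 s) = (1 - u) * (\<Sum>s\<in>UNIV. q1 s) + u * (\<Sum>s\<in>UNIV. q2 s)"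
    by (simp add: sum.distrib sum_distrib_left)
  then show ?thesis using assms by (auto simp: prob_simplex_def)
qed

lemma closed_prob_simplex: "closed (prob_simplex :: ('s::finite \<Rightarrow> real) set)"
proof -
  have "prob_simplex = {p :: 's \<Rightarrow> real. \<forall>s. 0 \<le> p s} \<inter> {p. (\<Sum>s\<in>UNIV. p s) = 1}"
    by (auto simp: prob_simplex_def)
  moreover have "closed {p :: 's \<Rightarrow> real. \<forall>s. 0 \<le> p s}"
    by (intro closed_Collect_all closed_Collect_le continuous_on_const continuous_on_product_coordinates)
  moreover have "closed {p :: 's \<Rightarrow> real. (\<Sum>s\<in>UNIV. p s) = 1}"
    by (intro closed_Collect_eq continuous_intros continuous_on_product_coordinates)
  ultimately show ?thesis by (metis closed_Int)
qed

lemma compact_prob_simplex: "compact (prob_simplex :: ('s::finite \<Rightarrow> real) set)"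
proof -
  have "compact (PiE (UNIV::'s set) (\<lambda>_. {0..1::real}))"
    using compactin_PiE[of "\<lambda>_. euclidean" UNIV "\<lambda>_. {0..1::real}"]
    by (simp add: euclidean_product_topology)
  moreover have "prob_simplex \<subseteq> PiE (UNIV::'s set) (\<lambda>_. {0..1::real})"
    by (auto simp: prob_simplex_le_one) (simp add: prob_simplex_def)
  ultimately show ?thesis
    using closed_prob_simplex compact_Int_closed by (metis inf.absorb_iff2)
qed

lemma prob_simplex_pair_convergent_subseq:
  fixes Q Q' :: "nat \<Rightarrow> 's::finite \<Rightarrow> real"
  assumes "\<And>n. Q n \<in> prob_simplex" "\<And>n. Q' n \<in> prob_simplex"
  obtains r q q' where "strict_mono r" "q \<in> prob_simplex" "q' \<in> prob_simplex"
    "(\<lambda>n. Q (r n)) \<longlonglongrightarrow> q" "(\<lambda>n. Q' (r n)) \<longlonglongrightarrow> q'"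
proof -
  have "seq_compact (prob_simplex \<times> (prob_simplex :: ('s \<Rightarrow> real) set))"
    by (intro compact_imp_seq_compact compact_Times compact_prob_simplex)
  moreover have "\<forall>n. (Q n, Q' n) \<in> prob_simplex \<times> prob_simplex" using assms by simp
  ultimately obtain l r where l: "l \<in> prob_simplex \<times> prob_simplex" and r: "strict_mono r"
    and lim: "((\<lambda>n. (Q n, Q' n)) \<circ> r) \<longlonglongrightarrow> l"
    by (rule seq_compactE)
  obtain q q' where "l = (q, q')" by (cases l)
  with l tendsto_fst[OF lim] tendsto_snd[OF lim] show ?thesis
    by (intro that[OF r]) (simp_all add: o_def)
qed

lemma tendsto_fun_apply:
  assumes "(X \<longlongrightarrow> x) F"
  shows "((\<lambda>n. X n s) \<longlongrightarrow> (x :: 'a::countable \<Rightarrow> 'b::metric_space) s) F"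
proof -
  have "isCont (\<lambda>x. x s) x"
    by (simp add: continuous_on_interior[of UNIV])
  from isCont_tendsto_compose[OF this assms] show ?thesis .
qed

lemma expect_le_sum_abs:
  assumes "p \<in> prob_simplex"
  shows "expect f p \<le> (\<Sum>s\<in>UNIV. \<bar>f s\<bar>)"
proof -
  have "expect f p \<le> (\<Sum>s\<in>UNIV. \<bar>f s\<bar> * 1)"
  proof (intro sum_mono)
    fix s
    have "0 \<le> p s" using assms by (simp add: prob_simplex_def)
    then have "f s * p s \<le> \<bar>f s\<bar> * p s" by (simp add: mult_right_mono)
    also have "\<dots> \<le> \<bar>f s\<bar> * 1" by (rule mult_left_mono) (simp_all add: prob_simplex_le_one[OF assms])
    finally show "f s * p s \<le> \<bar>f s\<bar> * 1" .
  qed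
  then show ?thesis by simp
qed

section \<open>Upper tail sums\<close>

definition tail_nonneg :: "('s::linorder \<Rightarrow> real) \<Rightarrow> bool" where
  "tail_nonneg e \<longleftrightarrow> (\<forall>t. 0 \<le> (\<Sum>s\<in>{s. t \<le> s}. e s))"

lemma fosd_iff_tail_nonneg: "fosd p q \<longleftrightarrow> tail_nonneg (\<lambda>s. p s - q s)"
  by (simp add: fosd_def tail_nonneg_def sum_subtractf)

lemma tail_nonneg_combination:
  assumes "tail_nonneg e1" "tail_nonneg e2" "0 \<le> u" "0 \<le> v"
  shows "tail_nonneg (\<lambda>s. u * e1 s + v * e2 s)"
  using assms by (simp add: tail_nonneg_def sum.distrib sum_distrib_left[symmetric])

lemma tail_nonneg_limit:
  fixes E :: "nat \<Rightarrow> 's::{finite,linorder} \<Rightarrow> real"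
  assumes "\<And>n. tail_nonneg (E n)" "\<And>s. (\<lambda>n. E n s) \<longlonglongrightarrow> e s"
  shows "tail_nonneg e"
  unfolding tail_nonneg_def
proof
  fix t :: 's
  have "(\<lambda>n. \<Sum>s\<in>{s. t \<le> s}. E n s) \<longlonglongrightarrow> (\<Sum>s\<in>{s. t \<le> s}. e s)"
    by (intro tendsto_sum assms(2))
  then show "0 \<le> (\<Sum>s\<in>{s. t \<le> s}. e s)"
    using assms(1) by (intro LIMSEQ_le_const) (auto simp: tail_nonneg_def)
qed

text \<open>Summation by parts, peeling off the least element.\<close>
lemma sum_mult_nonneg_if_tails_nonneg:
  fixes d g :: "'s::linorder \<Rightarrow> real"
  assumes "finite S" "mono g" "\<And>s. s \<in> S \<Longrightarrow> 0 \<le> g s"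
    and "\<And>t. 0 \<le> (\<Sum>s\<in>{s\<in>S. t \<le> s}. d s)"
  shows "0 \<le> (\<Sum>s\<in>S. g s * d s)"
  using assms
proof (induction S arbitrary: g rule: finite_linorder_min_induct)
  case empty
  then show ?case by simp
next
  case (insert b A)
  have tails_A: "0 \<le> (\<Sum>s\<in>{s\<in>A. t \<le> s}. d s)" for t
  proof (cases "b < t")
    case True
    then have "{s\<in>insert b A. t \<le> s} = {s\<in>A. t \<le> s}" by auto
    then show ?thesis using insert.prems(3) by metis
  next
    case False
    then have "{s\<in>A. t \<le> s} = A" using insert.hyps(2) by force
    moreover have "0 \<le> (\<Sum>s\<in>A. d s)"
    proof (cases "A = {}")
      case False
      then have "b < Min A" using insert.hyps(1,2) by simp
      then have "{s\<in>insert b A. Min A \<le> s} = A" using insert.hyps(1) by (auto intro: Min_le)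
      then show ?thesis using insert.prems(3) by metis
    qed simp
    ultimately show ?thesis by simp
  qed
  have "{s\<in>insert b A. b \<le> s} = insert b A" using insert.hyps(2) by auto
  then have "0 \<le> g b * (\<Sum>s\<in>insert b A. d s)"
    using insert.prems(2,3) by (metis insertI1 mult_nonneg_nonneg)
  moreover have "0 \<le> (\<Sum>s\<in>A. (g s - g b) * d s)"
    using insert.prems(1) insert.hyps(2) tails_A
    by (intro insert.IH) (auto simp: mono_def intro: order.strict_implies_order)
  moreover have "(\<Sum>s\<in>insert b A. g s * d s) = g b * (\<Sum>s\<in>insert b A. d s) + (\<Sum>s\<in>A. (g s - g b) * d s)"
  proof -
    have "b \<notin> A" using insert.hyps(2) by blast
    then show ?thesis using insert.hyps(1)
      by (simp add: sum_distrib_left left_diff_distrib sum_subtractf algebra_simps)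
  qed
  ultimately show ?case by linarith
qed

lemma expect_nonneg_if_tail_nonneg:
  fixes e g :: "'s::{finite,linorder} \<Rightarrow> real"
  assumes "mono g" "tail_nonneg e" "(\<Sum>s\<in>UNIV. e s) = 0"
  shows "0 \<le> expect g e"
proof -
  define m where "m = Min (UNIV::'s set)"
  have "0 \<le> (\<Sum>s\<in>UNIV. (g s - g m) * e s)"
    using assms(1,2) by (intro sum_mult_nonneg_if_tails_nonneg) (auto simp: m_def mono_def tail_nonneg_def)
  also have "\<dots> = expect g e - g m * (\<Sum>s\<in>UNIV. e s)"
    by (simp add: algebra_simps sum_subtractf sum_distrib_left)
  finally show ?thesis using assms(3) by simp
qed

lemma mono_if_expect_tail_nonneg:
  fixes g :: "'s::{finite,linorder} \<Rightarrow> real"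
  assumes "\<And>e :: 's \<Rightarrow> real. tail_nonneg e \<Longrightarrow> 0 \<le> expect g e"
  shows "mono g"
proof
  fix s s' :: 's assume "s \<le> s'"
  define e :: "'s \<Rightarrow> real" where "e x = (if x = s' then 1 else 0) - (if x = s then 1 else 0)" for x
  have "tail_nonneg e"
    using \<open>s \<le> s'\<close> by (auto simp: tail_nonneg_def e_def sum_subtractf)
  moreover have "expect g e = (\<Sum>x\<in>UNIV. if x = s' then g x else 0) - (\<Sum>x\<in>UNIV. if x = s then g x else 0)"
    unfolding e_def sum_subtractf[symmetric] by (rule sum.cong) auto
  ultimately show "g s \<le> g s'" using assms by fastforce
qed

lemma nonneg_cost_add_le:
  assumes "nonneg_cost c" "nonneg_cost c'" "q \<in> prob_simplex" "q' \<in> prob_simplex"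
    and "c q + c' q' \<le> ereal a"
  obtains x x' where "c q = ereal x" "c' q' = ereal x'" "x + x' \<le> a"
proof -
  have "0 \<le> c q" "0 \<le> c' q'" using assms(1-4) by (auto simp: nonneg_cost_def)
  then show ?thesis using assms(5) that by (cases "c q"; cases "c' q'") auto
qed

lemma convex_cost_combination_le:
  assumes "convex_cost c" "nonneg_cost c" "q1 \<in> prob_simplex" "q2 \<in> prob_simplex"
    and "c q1 \<le> ereal x1" "c q2 \<le> ereal x2" "0 \<le> u" "u \<le> 1"
  shows "c (\<lambda>s. (1 - u) * q1 s + u * q2 s) \<le> ereal ((1 - u) * x1 + u * x2)"
proof -
  have "c (\<lambda>s. (1 - u) * q1 s + (1 - (1 - u)) * q2 s) \<le> ereal (1 - u) * c q1 + ereal (1 - (1 - u)) * c q2"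
    using assms(7,8) by (intro assms(1)[unfolded convex_cost_def, rule_format, OF assms(3,4)]) simp
  then have "c (\<lambda>s. (1 - u) * q1 s + u * q2 s) \<le> ereal (1 - u) * c q1 + ereal u * c q2"
    by simp
  also have "\<dots> \<le> ereal (1 - u) * ereal x1 + ereal u * ereal x2"
    using assms(5-8) by (intro add_mono ereal_mult_left_mono) auto
  finally show ?thesis by simp
qed

lemma lsc_cost_add_le_limit:
  assumes "lsc_cost c" "lsc_cost c'" "nonneg_cost c" "nonneg_cost c'"
    and "q \<in> prob_simplex" "q' \<in> prob_simplex" "\<And>n. Q n \<in> prob_simplex" "\<And>n. Q' n \<in> prob_simplex"
    and "Q \<longlonglongrightarrow> q" "Q' \<longlonglongrightarrow> q'" "\<And>n. c (Q n) + c' (Q' n) \<le> ereal (a n)" "a \<longlonglongrightarrow> A"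
  shows "c q + c' q' \<le> ereal A"
proof -
  have "c q + c' q' \<le> liminf (\<lambda>n. c (Q n)) + liminf (\<lambda>n. c' (Q' n))"
    using assms(1,2,5-10) by (intro add_mono) (auto simp: lsc_cost_def)
  also have "\<dots> \<le> liminf (\<lambda>n. c (Q n) + c' (Q' n))"
    using assms(3,4,7,8) by (intro Liminf_add_le) (auto simp: nonneg_cost_def)
  also have "\<dots> \<le> liminf (\<lambda>n. ereal (a n))"
    using assms(11) by (intro Liminf_mono) simp
  also have "\<dots> = ereal A"
    using assms(12) by (intro lim_imp_Liminf) auto
  finally show ?thesis .
qed

lemma val_upper:
  assumes "p \<in> prob_simplex"
  shows "- c p + ereal (expect f p) \<le> val c f"
  unfolding val_def using assms by (rule SUP_upper2) simp

lemma grounded_obtains_cheap_point: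
  assumes "grounded c"
  obtains p where "p \<in> prob_simplex" "c p < 1"
proof -
  have "(INF p\<in>prob_simplex. c p) < 1" using assms unfolding grounded_def by simp
  then show ?thesis using that by (auto simp: INF_less_iff)
qed

lemma val_finite:
  assumes "nonneg_cost c" "grounded c"
  obtains r where "val c f = ereal r"
proof -
  obtain p where p: "p \<in> prob_simplex" "c p < 1" using assms(2) by (rule grounded_obtains_cheap_point)
  then obtain x where x: "c p = ereal x"
    using assms(1) by (cases "c p") (auto simp: nonneg_cost_def)
  have "ereal (- x + expect f p) \<le> val c f"
    using val_upper[OF p(1), of c f] x by simp
  moreover have "val c f \<le> ereal (\<Sum>s\<in>UNIV. \<bar>f s\<bar>)"
    unfolding val_def
  proof (rule SUP_least)
    fix q :: "'a \<Rightarrow> real" assume q: "q \<in> prob_simplex"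
    then have "0 \<le> c q" using assms(1) by (simp add: nonneg_cost_def)
    then show "- c q + ereal (expect f q) \<le> ereal (\<Sum>s\<in>UNIV. \<bar>f s\<bar>)"
      using expect_le_sum_abs[OF q, of f] by (cases "c q") auto
  qed
  ultimately show ?thesis using that by (cases "val c f") auto
qed

lemma val_diff_const:
  fixes c :: "('s::finite \<Rightarrow> real) \<Rightarrow> ereal"
  shows "val c (\<lambda>s. f s - k) = val c f - ereal k"
proof -
  have "- c p + ereal (expect (\<lambda>s. f s - k) p) = - c p + ereal (expect f p) - ereal k"
    if "p \<in> prob_simplex" for p
  proof -
    have "expect (\<lambda>s. f s - k) p = expect f p - k"
      using that by (simp add: prob_simplex_def left_diff_distrib sum_subtractf sum_distrib_left[symmetric])
    then show ?thesis by (cases "c p") auto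
  qed
  then show ?thesis
    unfolding val_def by (simp add: SUP_ereal_minus_left[OF prob_simplex_nonempty] cong: SUP_cong)
qed

lemma val_add_le:
  fixes c c' :: "('s::finite \<Rightarrow> real) \<Rightarrow> ereal" and f f' :: "'s \<Rightarrow> real"
  assumes "nonneg_cost c" "nonneg_cost c'" "grounded c'"
    and "\<And>p p' x x'. p \<in> prob_simplex \<Longrightarrow> p' \<in> prob_simplex \<Longrightarrow> c p = ereal x \<Longrightarrow> c' p' = ereal x' \<Longrightarrow>
      - x + expect f p + (- x' + expect f' p') \<le> z"
  shows "val c f + val c' f' \<le> ereal z"
proof -
  obtain w where w: "val c' f' = ereal w" using assms(2,3) by (rule val_finite)
  have "val c f \<le> ereal (z - w)"
    unfolding val_def
  proof (rule SUP_least)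
    fix p :: "'s \<Rightarrow> real" assume p: "p \<in> prob_simplex"
    show "- c p + ereal (expect f p) \<le> ereal (z - w)"
    proof (cases "c p")
      case (real x)
      have "val c' f' \<le> ereal (z + x - expect f p)"
        unfolding val_def
      proof (rule SUP_least)
        fix p' :: "'s \<Rightarrow> real" assume p': "p' \<in> prob_simplex"
        show "- c' p' + ereal (expect f' p') \<le> ereal (z + x - expect f p)"
          using assms(4)[OF p p' real] assms(2) p' by (cases "c' p'") (auto simp: nonneg_cost_def)
      qed
      then show ?thesis using w real by simp
    qed (use assms(1) p in \<open>auto simp: nonneg_cost_def\<close>)
  qed
  then show ?thesis using w by (cases "val c f") auto
qed

section \<open>Increasing differences of the value\<close>

definition val_increasing_differences ::
    "(('s::{finite,linorder} \<Rightarrow> real) \<Rightarrow> ereal) \<Rightarrow> (('s \<Rightarrow> real) \<Rightarrow> ereal) \<Rightarrow> bool" where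
  "val_increasing_differences c c' \<longleftrightarrow>
    (\<forall>f f'. mono (\<lambda>s. f s - f' s) \<longrightarrow> val c f' + val c' f \<le> val c f + val c' f')"

lemma val_increasing_differences_iff:
  fixes c c' :: "('s::{finite,linorder} \<Rightarrow> real) \<Rightarrow> ereal"
  assumes "nonneg_cost c" "grounded c" "nonneg_cost c'" "grounded c'"
  shows "val_increasing_differences c c' \<longleftrightarrow>
    (\<forall>f f' :: 's \<Rightarrow> real. mono (\<lambda>s. f s - f' s) \<longrightarrow>
       (val c' f \<ge> val c' f' \<longrightarrow> val c f \<ge> val c f') \<and>
       (val c' f > val c' f' \<longrightarrow> val c f > val c f'))"
    (is "_ \<longleftrightarrow> (\<forall>f f'. ?mono f f' \<longrightarrow> ?impl f f')")
proof (intro iffI allI impI)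
  fix f f' :: "'s \<Rightarrow> real"
  assume "val_increasing_differences c c'" and "?mono f f'"
  then have "val c f' + val c' f \<le> val c f + val c' f'"
    by (simp add: val_increasing_differences_def)
  moreover obtain v v' where "val c f = ereal v" "val c f' = ereal v'"
    using val_finite[OF assms(1,2)] by metis
  moreover obtain w w' where "val c' f = ereal w" "val c' f' = ereal w'"
    using val_finite[OF assms(3,4)] by metis
  ultimately show "?impl f f'" by auto
next
  assume impl: "\<forall>f f'. ?mono f f' \<longrightarrow> ?impl f f'"
  show "val_increasing_differences c c'"
    unfolding val_increasing_differences_def
  proof (intro allI impI)
    fix f f' :: "'s \<Rightarrow> real" assume "?mono f f'"
    obtain v v' where v: "val c f = ereal v" "val c f' = ereal v'"
      using val_finite[OF assms(1,2)] by metis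
    obtain w w' where w: "val c' f = ereal w" "val c' f' = ereal w'"
      using val_finite[OF assms(3,4)] by metis
    define k where "k = w - w'"
    have "?mono (\<lambda>s. f s - k) f'" using \<open>?mono f f'\<close> by (simp add: mono_def)
    moreover have "val c' (\<lambda>s. f s - k) = val c' f'" by (simp add: val_diff_const w k_def)
    ultimately have "val c f' \<le> val c (\<lambda>s. f s - k)" using impl by auto
    then show "val c f' + val c' f \<le> val c f + val c' f'"
      by (simp add: val_diff_const v w k_def)
  qed
qed

lemma expect_up_shift_le:
  fixes p p' q q' f f' :: "'s::{finite,linorder} \<Rightarrow> real"
  assumes "fosd q p'" "\<And>s. q s + q' s = p s + p' s" "(\<Sum>s\<in>UNIV. q s) = (\<Sum>s\<in>UNIV. p' s)"
    and "mono (\<lambda>s. f s - f' s)"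
  shows "expect f' p + expect f p' \<le> expect f q + expect f' q'"
proof -
  have "0 \<le> expect (\<lambda>s. f s - f' s) (\<lambda>s. q s - p' s)"
    using assms(1,3,4) by (intro expect_nonneg_if_tail_nonneg) (simp_all add: fosd_iff_tail_nonneg sum_subtractf)
  moreover have "q' = (\<lambda>s. p s + p' s - q s)"
  proof
    fix s show "q' s = p s + p' s - q s" using assms(2)[of s] by linarith
  qed
  ultimately show ?thesis by (simp add: algebra_simps sum.distrib sum_subtractf)
qed

lemma up_shifted_imp_val_increasing_differences:
  fixes c c' :: "('s::{finite,linorder} \<Rightarrow> real) \<Rightarrow> ereal"
  assumes "up_shifted c c'" "nonneg_cost c" "nonneg_cost c'" "grounded c" "grounded c'"
  shows "val_increasing_differences c c'"
  unfolding val_increasing_differences_def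
proof (intro allI impI)
  fix f f' :: "'s \<Rightarrow> real" assume mono: "mono (\<lambda>s. f s - f' s)"
  obtain v where v: "val c f = ereal v" using assms(2,4) by (rule val_finite)
  obtain w' where w': "val c' f' = ereal w'" using assms(3,5) by (rule val_finite)
  have "val c f' + val c' f \<le> ereal (v + w')"
  proof (rule val_add_le[OF assms(2,3,5)])
    fix p p' x x' assume p: "p \<in> prob_simplex" "p' \<in> prob_simplex" and x: "c p = ereal x" "c' p' = ereal x'"
    obtain q q' where q: "q \<in> prob_simplex" "q' \<in> prob_simplex" "fosd q p'"
      and avg: "(\<lambda>s. (1/2) * p s + (1/2) * p' s) = (\<lambda>s. (1/2) * q s + (1/2) * q' s)"
      and cost: "c q + c' q' \<le> c p + c' p'"
      using assms(1) p unfolding up_shifted_def by blast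
    have "c q + c' q' \<le> ereal (x + x')" using cost x by simp
    then obtain y y' where y: "c q = ereal y" "c' q' = ereal y'" "y + y' \<le> x + x'"
      using nonneg_cost_add_le[OF assms(2,3) q(1,2)] by blast
    have "q s + q' s = p s + p' s" for s using fun_cong[OF avg, of s] by (simp add: field_simps)
    then have "expect f' p + expect f p' \<le> expect f q + expect f' q'"
      using q p mono by (intro expect_up_shift_le) (simp_all add: prob_simplex_def)
    moreover have "- y + expect f q \<le> v" using val_upper[OF q(1), of c f] v y by simp
    moreover have "- y' + expect f' q' \<le> w'" using val_upper[OF q(2), of c' f'] w' y by simp
    ultimately show "- x + expect f' p + (- x' + expect f p') \<le> v + w'" using y(3) by linarith
  qed
  then show "val c f' + val c' f \<le> val c f + val c' f'" by (simp add: v w')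
qed

section \<open>Separation\<close>

text \<open>The point \<open>(0, 0, c p + c' p')\<close> lies in this set exactly when \<open>(p, p')\<close> has an up-shift
  witness: the first coordinate forces \<open>q + q' = p + p'\<close>, and the slack \<open>e\<close> ranges over the cone
  expressing \<open>fosd q p'\<close>. Coordinates are vectors in \<open>real^'s\<close> because the separating
  hyperplane theorem needs an inner product space.\<close>
definition deviation_set ::
    "(('s::{finite,linorder} \<Rightarrow> real) \<Rightarrow> ereal) \<Rightarrow> (('s \<Rightarrow> real) \<Rightarrow> ereal) \<Rightarrow> ('s \<Rightarrow> real) \<Rightarrow> ('s \<Rightarrow> real)
      \<Rightarrow> ((real, 's) vec \<times> (real, 's) vec \<times> real) set" where
  "deviation_set c c' p p' =
    {((\<chi> s. q s + q' s - p s - p' s), (\<chi> s. q s - p' s - e s), \<alpha>) | q q' e \<alpha>.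
      q \<in> prob_simplex \<and> q' \<in> prob_simplex \<and> tail_nonneg e \<and> c q + c' q' \<le> ereal \<alpha>}"

lemma deviation_setI:
  "q \<in> prob_simplex \<Longrightarrow> q' \<in> prob_simplex \<Longrightarrow> tail_nonneg e \<Longrightarrow> c q + c' q' \<le> ereal \<alpha> \<Longrightarrow>
   ((\<chi> s. q s + q' s - p s - p' s), (\<chi> s. q s - p' s - e s), \<alpha>) \<in> deviation_set c c' p p'"
  unfolding deviation_set_def by blast

lemma convex_deviation_set:
  assumes "nonneg_cost c" "nonneg_cost c'" "convex_cost c" "convex_cost c'"
  shows "convex (deviation_set c c' p p')"
  unfolding convex_alt
proof (intro ballI allI impI)
  fix z1 z2 and u :: real
  assume z: "z1 \<in> deviation_set c c' p p'" "z2 \<in> deviation_set c c' p p'" and u: "0 \<le> u \<and> u \<le> 1"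
  obtain q1 q1' e1 \<alpha>1 where z1: "z1 = ((\<chi> s. q1 s + q1' s - p s - p' s), (\<chi> s. q1 s - p' s - e1 s), \<alpha>1)"
    and h1: "q1 \<in> prob_simplex" "q1' \<in> prob_simplex" "tail_nonneg e1" "c q1 + c' q1' \<le> ereal \<alpha>1"
    using z(1) unfolding deviation_set_def by blast
  obtain q2 q2' e2 \<alpha>2 where z2: "z2 = ((\<chi> s. q2 s + q2' s - p s - p' s), (\<chi> s. q2 s - p' s - e2 s), \<alpha>2)"
    and h2: "q2 \<in> prob_simplex" "q2' \<in> prob_simplex" "tail_nonneg e2" "c q2 + c' q2' \<le> ereal \<alpha>2"
    using z(2) unfolding deviation_set_def by blast
  obtain x1 x1' where x1: "c q1 = ereal x1" "c' q1' = ereal x1'" "x1 + x1' \<le> \<alpha>1"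
    using nonneg_cost_add_le[OF assms(1,2) h1(1,2,4)] by blast
  obtain x2 x2' where x2: "c q2 = ereal x2" "c' q2' = ereal x2'" "x2 + x2' \<le> \<alpha>2"
    using nonneg_cost_add_le[OF assms(1,2) h2(1,2,4)] by blast
  define q q' e where "q s = (1 - u) * q1 s + u * q2 s" and "q' s = (1 - u) * q1' s + u * q2' s"
    and "e s = (1 - u) * e1 s + u * e2 s" for s
  have "c q + c' q' \<le> ereal ((1 - u) * x1 + u * x2) + ereal ((1 - u) * x1' + u * x2')"
    using u x1 x2 h1 h2 unfolding q_def q'_def
    by (intro add_mono convex_cost_combination_le assms) auto
  also have "\<dots> \<le> ereal ((1 - u) * \<alpha>1 + u * \<alpha>2)"
  proof -
    have "(1 - u) * (x1 + x1') + u * (x2 + x2') \<le> (1 - u) * \<alpha>1 + u * \<alpha>2"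
      using u x1(3) x2(3) by (intro add_mono mult_left_mono) auto
    then show ?thesis by (simp add: algebra_simps)
  qed
  finally have "c q + c' q' \<le> ereal ((1 - u) * \<alpha>1 + u * \<alpha>2)" .
  moreover have "q \<in> prob_simplex" "q' \<in> prob_simplex"
    using u h1 h2 unfolding q_def q'_def by (auto intro: prob_simplex_convex_combination)
  moreover have "tail_nonneg e"
    using u h1(3) h2(3) unfolding e_def by (intro tail_nonneg_combination) auto
  ultimately have "((\<chi> s. q s + q' s - p s - p' s), (\<chi> s. q s - p' s - e s), (1 - u) * \<alpha>1 + u * \<alpha>2)
      \<in> deviation_set c c' p p'"
    by (blast intro: deviation_setI)
  moreover have "(1 - u) *\<^sub>R z1 + u *\<^sub>R z2
      = ((\<chi> s. q s + q' s - p s - p' s), (\<chi> s. q s - p' s - e s), (1 - u) * \<alpha>1 + u * \<alpha>2)"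
    unfolding z1 z2 q_def q'_def e_def by (simp add: vec_eq_iff algebra_simps)
  ultimately show "(1 - u) *\<^sub>R z1 + u *\<^sub>R z2 \<in> deviation_set c c' p p'" by simp
qed

lemma witness_conditions_of_deviation_limit:
  fixes Q Q' E :: "nat \<Rightarrow> 's::{finite,linorder} \<Rightarrow> real"
  assumes "(\<lambda>n. ((\<chi> s. Q n s + Q' n s - p s - p' s), (\<chi> s. Q n s - p' s - E n s))) \<longlonglongrightarrow> (0, 0)"
    and "\<And>n. tail_nonneg (E n)" "Q \<longlonglongrightarrow> q" "Q' \<longlonglongrightarrow> q'"
  shows "q s + q' s = p s + p' s" "tail_nonneg (\<lambda>s. q s - p' s)"
proof -
  have Qs: "(\<lambda>n. Q n s) \<longlonglongrightarrow> q s" "(\<lambda>n. Q' n s) \<longlonglongrightarrow> q' s" for s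
    using assms(3,4) by (auto intro: tendsto_fun_apply)
  have "(\<lambda>n. Q n s + Q' n s - p s - p' s) \<longlonglongrightarrow> q s + q' s - p s - p' s"
    by (intro tendsto_intros Qs)
  moreover have "(\<lambda>n. Q n s + Q' n s - p s - p' s) \<longlonglongrightarrow> 0"
    using tendsto_vec_nth[OF tendsto_fst[OF assms(1)], of s] by simp
  ultimately have "q s + q' s - p s - p' s = 0" by (rule LIMSEQ_unique)
  then show "q s + q' s = p s + p' s" by linarith
  show "tail_nonneg (\<lambda>s. q s - p' s)"
  proof (rule tail_nonneg_limit[OF assms(2)])
    fix s
    have "(\<lambda>n. Q n s - p' s - E n s) \<longlonglongrightarrow> 0"
      using tendsto_vec_nth[OF tendsto_snd[OF assms(1)], of s] by simp
    then have "(\<lambda>n. Q n s - p' s - (Q n s - p' s - E n s)) \<longlonglongrightarrow> q s - p' s - 0"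
      by (intro tendsto_intros Qs)
    then show "(\<lambda>n. E n s) \<longlonglongrightarrow> q s - p' s" by simp
  qed
qed

lemma witness_if_in_closure_deviation_set:
  assumes "nonneg_cost c" "nonneg_cost c'" "lsc_cost c" "lsc_cost c'"
    and "(0, 0, A) \<in> closure (deviation_set c c' p p')"
  obtains q q' where "q \<in> prob_simplex" "q' \<in> prob_simplex" "\<And>s. q s + q' s = p s + p' s"
    "tail_nonneg (\<lambda>s. q s - p' s)" "c q + c' q' \<le> ereal A"
proof -
  obtain X where X: "\<And>n. X n \<in> deviation_set c c' p p'" and lim: "X \<longlonglongrightarrow> (0, 0, A)"
    using assms(5) closure_sequential by blast
  have "\<forall>n. \<exists>q q' e \<alpha>. X n = ((\<chi> s. q s + q' s - p s - p' s), (\<chi> s. q s - p' s - e s), \<alpha>) \<and>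
      q \<in> prob_simplex \<and> q' \<in> prob_simplex \<and> tail_nonneg e \<and> c q + c' q' \<le> ereal \<alpha>"
    using X unfolding deviation_set_def by blast
  then obtain Q Q' E a where "\<forall>n. X n = ((\<chi> s. Q n s + Q' n s - p s - p' s), (\<chi> s. Q n s - p' s - E n s), a n) \<and>
      Q n \<in> prob_simplex \<and> Q' n \<in> prob_simplex \<and> tail_nonneg (E n) \<and> c (Q n) + c' (Q' n) \<le> ereal (a n)"
    unfolding choice_iff by blast
  then have X_eq: "\<And>n. X n = ((\<chi> s. Q n s + Q' n s - p s - p' s), (\<chi> s. Q n s - p' s - E n s), a n)"
    and QE: "\<And>n. Q n \<in> prob_simplex" "\<And>n. Q' n \<in> prob_simplex" "\<And>n. tail_nonneg (E n)"
      "\<And>n. c (Q n) + c' (Q' n) \<le> ereal (a n)"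
    by auto
  obtain r q q' where r: "strict_mono r" and q: "q \<in> prob_simplex" "q' \<in> prob_simplex"
    and Q: "(\<lambda>n. Q (r n)) \<longlonglongrightarrow> q" "(\<lambda>n. Q' (r n)) \<longlonglongrightarrow> q'"
    by (rule prob_simplex_pair_convergent_subseq[OF QE(1,2)])
  have Xr: "(\<lambda>n. X (r n)) \<longlonglongrightarrow> (0, 0, A)"
    using LIMSEQ_subseq_LIMSEQ[OF lim r] by (simp add: o_def)
  have "(\<lambda>n. ((\<chi> s. Q (r n) s + Q' (r n) s - p s - p' s), (\<chi> s. Q (r n) s - p' s - E (r n) s)))
      \<longlonglongrightarrow> (0, 0)"
    using tendsto_Pair[OF tendsto_fst[OF Xr] tendsto_fst[OF tendsto_snd[OF Xr]]] by (simp add: X_eq)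
  from witness_conditions_of_deviation_limit[OF this _ Q] QE(3)
  have "\<And>s. q s + q' s = p s + p' s" "tail_nonneg (\<lambda>s. q s - p' s)" by blast+
  moreover have "c q + c' q' \<le> ereal A"
  proof (rule lsc_cost_add_le_limit[OF assms(3,4,1,2) q])
    show "(\<lambda>n. a (r n)) \<longlonglongrightarrow> A"
      using tendsto_snd[OF tendsto_snd[OF Xr]] by (simp add: X_eq)
  qed (use QE Q in auto)
  ultimately show ?thesis by (rule that[OF q])
qed

lemma nonneg_if_ray_bounded_below:
  fixes b K L :: real
  assumes "\<And>t. 0 \<le> t \<Longrightarrow> b < K + t * L"
  shows "0 \<le> L"
proof (rule ccontr)
  assume "\<not> 0 \<le> L"
  then have "b < K + ((\<bar>K\<bar> + \<bar>b\<bar>) / - L) * L" by (intro assms divide_nonneg_pos) auto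
  also have "\<dots> = K - \<bar>K\<bar> - \<bar>b\<bar>" using \<open>\<not> 0 \<le> L\<close> by (simp add: field_simps)
  finally show False by linarith
qed

text \<open>The signs come from letting the cost level \<open>\<alpha>\<close> and the slack \<open>e\<close> grow along rays.\<close>
lemma separating_functional_signs:
  fixes a1 a2 :: "'s::{finite,linorder} \<Rightarrow> real"
  assumes "grounded c" "grounded c'"
    and sep: "\<And>q q' e \<alpha>. q \<in> prob_simplex \<Longrightarrow> q' \<in> prob_simplex \<Longrightarrow> tail_nonneg e \<Longrightarrow>
      c q + c' q' \<le> ereal \<alpha> \<Longrightarrow>
      b < expect a1 (\<lambda>s. q s + q' s - p s - p' s) + expect a2 (\<lambda>s. q s - p' s - e s) + \<beta> * \<alpha>"
  shows "0 \<le> \<beta>" "mono (\<lambda>s. - a2 s)"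
proof -
  obtain q0 where q0: "q0 \<in> prob_simplex" "c q0 < 1" using assms(1) by (rule grounded_obtains_cheap_point)
  obtain q0' where q0': "q0' \<in> prob_simplex" "c' q0' < 1" using assms(2) by (rule grounded_obtains_cheap_point)
  define K where "K = expect a1 (\<lambda>s. q0 s + q0' s - p s - p' s) + expect a2 (\<lambda>s. q0 s - p' s)"
  have sep0: "b < K + \<beta> * 2 + t * \<beta> + expect a2 (\<lambda>s. - e s)" if "tail_nonneg e" "0 \<le> t" for e t
  proof -
    have "c q0 + c' q0' \<le> 1 + 1" using q0(2) q0'(2) by (intro add_mono) auto
    also have "\<dots> \<le> ereal (2 + t)" using that(2) by (simp add: one_ereal_def)
    finally have "b < expect a1 (\<lambda>s. q0 s + q0' s - p s - p' s) + expect a2 (\<lambda>s. q0 s - p' s - e s) + \<beta> * (2 + t)"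
      using sep[OF q0(1) q0'(1) that(1)] by blast
    then show ?thesis by (simp add: K_def algebra_simps sum.distrib sum_subtractf sum_negf)
  qed
  have "tail_nonneg (\<lambda>_. 0)" by (simp add: tail_nonneg_def)
  from sep0[OF this] show "0 \<le> \<beta>"
    by (intro nonneg_if_ray_bounded_below[of b "K + \<beta> * 2"]) simp
  show "mono (\<lambda>s. - a2 s)"
  proof (rule mono_if_expect_tail_nonneg)
    fix e :: "'s \<Rightarrow> real" assume e: "tail_nonneg e"
    have "b < K + \<beta> * 2 + t * expect (\<lambda>s. - a2 s) e" if "0 \<le> t" for t
      using sep0[OF tail_nonneg_combination[OF e e that order_refl], of 0]
      by (simp add: sum_distrib_left algebra_simps)
    then show "0 \<le> expect (\<lambda>s. - a2 s) e" by (rule nonneg_if_ray_bounded_below)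
  qed
qed

lemma affine_bound_rescale:
  fixes A b \<beta> :: real
  assumes "0 \<le> A" "0 \<le> \<beta>" "\<beta> * A < b"
  obtains \<kappa> d where "0 < \<kappa>" "0 < d" "\<And>M z. 0 \<le> z \<Longrightarrow> b < M + \<beta> * z \<Longrightarrow> A + d - \<kappa> * M \<le> z"
proof -
  define t where "t = (A + 1) / (b - \<beta> * A)"
  have t: "0 < t" "t * (b - \<beta> * A) = A + 1" using assms by (auto simp: t_def)
  have den: "0 < 1 + t * \<beta>" using t(1) assms(2) by (simp add: add_pos_nonneg)
  show ?thesis
  proof (rule that[of "t / (1 + t * \<beta>)" "t * b / (1 + t * \<beta>) - A"])
    show "0 < t / (1 + t * \<beta>)" using t(1) den by simp
    have "A * (1 + t * \<beta>) < t * b" using t(2) by (simp add: algebra_simps)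
    then show "0 < t * b / (1 + t * \<beta>) - A" using den by (simp add: field_simps)
  next
    fix M z :: real assume "0 \<le> z" "b < M + \<beta> * z"
    then have "t * (b - M) \<le> t * (\<beta> * z)" using t(1) by (intro mult_left_mono) auto
    then have "t * b - t * M \<le> (1 + t * \<beta>) * z" using \<open>0 \<le> z\<close> by (simp add: algebra_simps)
    have "A + (t * b / (1 + t * \<beta>) - A) - t / (1 + t * \<beta>) * M = (t * b - t * M) / (1 + t * \<beta>)"
      by (simp add: diff_divide_distrib)
    also have "\<dots> \<le> z" using \<open>t * b - t * M \<le> (1 + t * \<beta>) * z\<close> den by (simp add: divide_le_eq mult.commute)
    finally show "A + (t * b / (1 + t * \<beta>) - A) - t / (1 + t * \<beta>) * M \<le> z" .
  qed
qed

lemma separate_from_deviation_set: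
  fixes c c' :: "('s::{finite,linorder} \<Rightarrow> real) \<Rightarrow> ereal"
  assumes "nonneg_cost c" "nonneg_cost c'" "convex_cost c" "convex_cost c'" "lsc_cost c" "lsc_cost c'"
    and no_witness: "\<forall>q\<in>prob_simplex. \<forall>q'\<in>prob_simplex. (\<forall>s. q s + q' s = p s + p' s) \<longrightarrow>
      tail_nonneg (\<lambda>s. q s - p' s) \<longrightarrow> \<not> c q + c' q' \<le> ereal A"
  obtains \<beta> b and a1 a2 :: "'s \<Rightarrow> real" where "\<beta> * A < b"
    "\<And>q q' e \<alpha>. q \<in> prob_simplex \<Longrightarrow> q' \<in> prob_simplex \<Longrightarrow> tail_nonneg e \<Longrightarrow> c q + c' q' \<le> ereal \<alpha> \<Longrightarrow>
      b < expect a1 (\<lambda>s. q s + q' s - p s - p' s) + expect a2 (\<lambda>s. q s - p' s - e s) + \<beta> * \<alpha>"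
proof -
  let ?D = "deviation_set c c' p p'"
  have "(0, 0, A) \<notin> closure ?D"
  proof
    assume "(0, 0, A) \<in> closure ?D"
    then show False
    proof (rule witness_if_in_closure_deviation_set[OF assms(1,2,5,6)])
      fix q q' assume "q \<in> prob_simplex" "q' \<in> prob_simplex" "\<And>s. q s + q' s = p s + p' s"
        "tail_nonneg (\<lambda>s. q s - p' s)" "c q + c' q' \<le> ereal A"
      with no_witness show False by blast
    qed
  qed
  then obtain a b where "inner a (0, 0, A) < b" and ab: "\<And>z. z \<in> closure ?D \<Longrightarrow> b < inner a z"
    using separating_hyperplane_closed_point[OF convex_closure[OF convex_deviation_set[OF assms(1-4)]]
        closed_closure]
    by blast
  obtain a1 a2 \<beta> where a: "a = (a1, a2, \<beta>)" by (cases a) auto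
  show ?thesis
  proof (rule that[of \<beta> b "($) a1" "($) a2"])
    show "\<beta> * A < b" using \<open>inner a (0, 0, A) < b\<close> by (simp add: a inner_Pair)
  next
    fix q q' e :: "'s \<Rightarrow> real" and \<alpha> :: real
    assume "q \<in> prob_simplex" "q' \<in> prob_simplex" "tail_nonneg e" "c q + c' q' \<le> ereal \<alpha>"
    from ab[OF closure_subset[THEN subsetD, OF deviation_setI[where c=c and c'=c' and p=p and p'=p', OF this]]]
    show "b < expect (($) a1) (\<lambda>s. q s + q' s - p s - p' s) + expect (($) a2) (\<lambda>s. q s - p' s - e s) + \<beta> * \<alpha>"
      by (simp add: a inner_Pair inner_vec_def)
  qed
qed

lemma separating_payoffs:
  fixes c c' :: "('s::{finite,linorder} \<Rightarrow> real) \<Rightarrow> ereal"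
  assumes "nonneg_cost c" "nonneg_cost c'" "grounded c" "grounded c'"
    and "convex_cost c" "convex_cost c'" "lsc_cost c" "lsc_cost c'"
    and A: "0 \<le> A"
    and no_witness: "\<forall>q\<in>prob_simplex. \<forall>q'\<in>prob_simplex. (\<forall>s. q s + q' s = p s + p' s) \<longrightarrow>
      tail_nonneg (\<lambda>s. q s - p' s) \<longrightarrow> \<not> c q + c' q' \<le> ereal A"
  obtains F H :: "'s \<Rightarrow> real" and d where "mono H" "0 < d"
    "\<And>q q' x x'. q \<in> prob_simplex \<Longrightarrow> q' \<in> prob_simplex \<Longrightarrow> c q = ereal x \<Longrightarrow> c' q' = ereal x' \<Longrightarrow>
      A + d + expect F (\<lambda>s. q s + q' s - p s - p' s) + expect H (\<lambda>s. q s - p' s) \<le> x + x'"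
proof -
  obtain \<beta> b and a1 a2 :: "'s \<Rightarrow> real" where bA: "\<beta> * A < b"
    and sep: "\<And>q q' e \<alpha>. q \<in> prob_simplex \<Longrightarrow> q' \<in> prob_simplex \<Longrightarrow> tail_nonneg e \<Longrightarrow>
      c q + c' q' \<le> ereal \<alpha> \<Longrightarrow>
      b < expect a1 (\<lambda>s. q s + q' s - p s - p' s) + expect a2 (\<lambda>s. q s - p' s - e s) + \<beta> * \<alpha>"
    by (rule separate_from_deviation_set[OF assms(1,2,5-8) no_witness]) (rule that)
  have "0 \<le> \<beta>" "mono (\<lambda>s. - a2 s)"
    using separating_functional_signs[OF assms(3,4) sep] by blast+
  then obtain \<kappa> d where \<kappa>: "0 < \<kappa>" "0 < d"
    and rescale: "\<And>M z. 0 \<le> z \<Longrightarrow> b < M + \<beta> * z \<Longrightarrow> A + d - \<kappa> * M \<le> z"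
    using affine_bound_rescale[OF A _ bA] by blast
  show ?thesis
  proof (rule that[of "\<lambda>s. - \<kappa> * a2 s" d "\<lambda>s. - \<kappa> * a1 s"])
    show "mono (\<lambda>s. - \<kappa> * a2 s)"
      using \<open>mono (\<lambda>s. - a2 s)\<close> \<kappa>(1) by (simp add: mono_def)
  next
    fix q q' x x' assume q: "q \<in> prob_simplex" "q' \<in> prob_simplex" and x: "c q = ereal x" "c' q' = ereal x'"
    let ?M = "expect a1 (\<lambda>s. q s + q' s - p s - p' s) + expect a2 (\<lambda>s. q s - p' s)"
    have "0 \<le> c q" "0 \<le> c' q'" using assms(1,2) q by (auto simp: nonneg_cost_def)
    with x have "0 \<le> x + x'" by simp
    moreover have "b < ?M + \<beta> * (x + x')"
      using sep[OF q, of "\<lambda>_. 0"] x by (simp add: tail_nonneg_def)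
    ultimately have "A + d - \<kappa> * ?M \<le> x + x'" by (rule rescale)
    moreover have scale: "expect (\<lambda>s. - \<kappa> * a s) v = - \<kappa> * expect a v" for a v :: "'s \<Rightarrow> real"
      by (simp add: sum_distrib_left mult.assoc)
    ultimately show "A + d + expect (\<lambda>s. - \<kappa> * a1 s) (\<lambda>s. q s + q' s - p s - p' s)
        + expect (\<lambda>s. - \<kappa> * a2 s) (\<lambda>s. q s - p' s) \<le> x + x'"
      unfolding scale by (simp add: algebra_simps)
  qed (use \<kappa> in simp)
qed

lemma separating_payoffs_violate_increasing_differences:
  fixes c c' :: "('s::{finite,linorder} \<Rightarrow> real) \<Rightarrow> ereal" and F H :: "'s \<Rightarrow> real"
  assumes "nonneg_cost c" "nonneg_cost c'" "grounded c'"
    and p: "p \<in> prob_simplex" "p' \<in> prob_simplex" and A: "c p + c' p' = ereal A" and "0 < d"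
    and key: "\<And>q q' x x'. q \<in> prob_simplex \<Longrightarrow> q' \<in> prob_simplex \<Longrightarrow> c q = ereal x \<Longrightarrow> c' q' = ereal x' \<Longrightarrow>
      A + d + expect F (\<lambda>s. q s + q' s - p s - p' s) + expect H (\<lambda>s. q s - p' s) \<le> x + x'"
  shows "val c (\<lambda>s. F s + H s) + val c' F < val c F + val c' (\<lambda>s. F s + H s)"
proof -
  define R where "R = - A + expect F p + expect (\<lambda>s. F s + H s) p'"
  have "val c (\<lambda>s. F s + H s) + val c' F \<le> ereal (R - d)"
  proof (rule val_add_le[OF assms(1-3)])
    fix q q' x x' assume "q \<in> prob_simplex" "q' \<in> prob_simplex" "c q = ereal x" "c' q' = ereal x'"
    from key[OF this] show "- x + expect (\<lambda>s. F s + H s) q + (- x' + expect F q') \<le> R - d"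
      by (simp add: R_def algebra_simps sum.distrib sum_subtractf)
  qed
  also have "\<dots> < ereal R" using \<open>0 < d\<close> by simp
  also have "\<dots> \<le> val c F + val c' (\<lambda>s. F s + H s)"
  proof -
    obtain x x' where x: "c p = ereal x" "c' p' = ereal x'" "x + x' \<le> A"
      using nonneg_cost_add_le[OF assms(1,2) p, of A] A by auto
    then have "x + x' = A" using A by simp
    then have "ereal R = (- c p + ereal (expect F p)) + (- c' p' + ereal (expect (\<lambda>s. F s + H s) p'))"
      by (simp add: x R_def)
    also have "\<dots> \<le> val c F + val c' (\<lambda>s. F s + H s)"
      by (intro add_mono val_upper p)
    finally show ?thesis .
  qed
  finally show ?thesis .
qed

lemma up_shift_witness_if_tail_nonneg:
  assumes "\<And>s. q s + q' s = p s + p' s" "tail_nonneg (\<lambda>s. q s - p' s)"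
  shows "fosd p q'" "fosd q p'" "(\<lambda>s. (1/2) * p s + (1/2) * p' s) = (\<lambda>s. (1/2) * q s + (1/2) * q' s)"
proof -
  have "(\<lambda>s. p s - q' s) = (\<lambda>s. q s - p' s)" using assms(1) by (simp add: fun_eq_iff algebra_simps)
  then show "fosd p q'" "fosd q p'" using assms(2) by (simp_all add: fosd_iff_tail_nonneg)
  show "(\<lambda>s. (1/2) * p s + (1/2) * p' s) = (\<lambda>s. (1/2) * q s + (1/2) * q' s)"
  proof
    fix s show "(1/2) * p s + (1/2) * p' s = (1/2) * q s + (1/2) * q' s" using assms(1)[of s] by linarith
  qed
qed

lemma witness_if_val_increasing_differences:
  fixes c c' :: "('s::{finite,linorder} \<Rightarrow> real) \<Rightarrow> ereal"
  assumes inc: "val_increasing_differences c c'"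
    and "nonneg_cost c" "nonneg_cost c'" "grounded c" "grounded c'"
    and "convex_cost c" "convex_cost c'" "lsc_cost c" "lsc_cost c'"
    and p: "p \<in> prob_simplex" "p' \<in> prob_simplex" and A: "c p + c' p' = ereal A"
  obtains q q' where "q \<in> prob_simplex" "q' \<in> prob_simplex" "\<And>s. q s + q' s = p s + p' s"
    "tail_nonneg (\<lambda>s. q s - p' s)" "c q + c' q' \<le> ereal A"
proof (rule ccontr)
  note witness = that
  assume no_witness: "\<not> thesis"
  have "0 \<le> c p + c' p'" using assms(2,3) p by (auto simp: nonneg_cost_def)
  with A have "0 \<le> A" by simp
  then show False
  proof (rule separating_payoffs[OF assms(2-9)])
    show "\<forall>q\<in>prob_simplex. \<forall>q'\<in>prob_simplex. (\<forall>s. q s + q' s = p s + p' s) \<longrightarrow>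
        tail_nonneg (\<lambda>s. q s - p' s) \<longrightarrow> \<not> c q + c' q' \<le> ereal A"
      using no_witness witness by blast
  next
    fix F H d
    assume "mono H" "0 < d"
      and key: "\<And>q q' x x'. q \<in> prob_simplex \<Longrightarrow> q' \<in> prob_simplex \<Longrightarrow> c q = ereal x \<Longrightarrow>
        c' q' = ereal x' \<Longrightarrow>
        A + d + expect F (\<lambda>s. q s + q' s - p s - p' s) + expect H (\<lambda>s. q s - p' s) \<le> x + x'"
    have "val c (\<lambda>s. F s + H s) + val c' F < val c F + val c' (\<lambda>s. F s + H s)"
      using separating_payoffs_violate_increasing_differences[OF assms(2,3,5) p A \<open>0 < d\<close> key] .
    moreover have "val c F + val c' (\<lambda>s. F s + H s) \<le> val c (\<lambda>s. F s + H s) + val c' F"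
      using inc \<open>mono H\<close> unfolding val_increasing_differences_def by auto
    ultimately show False by simp
  qed
qed

lemma val_increasing_differences_imp_up_shifted:
  fixes c c' :: "('s::{finite,linorder} \<Rightarrow> real) \<Rightarrow> ereal"
  assumes "val_increasing_differences c c'"
    and "nonneg_cost c" "nonneg_cost c'" "grounded c" "grounded c'"
    and "convex_cost c" "convex_cost c'" "lsc_cost c" "lsc_cost c'"
  shows "up_shifted c c'"
  unfolding up_shifted_def
proof (intro ballI)
  fix p p' :: "'s \<Rightarrow> real" assume p: "p \<in> prob_simplex" "p' \<in> prob_simplex"
  show "\<exists>q\<in>prob_simplex. \<exists>q'\<in>prob_simplex. fosd p q' \<and> fosd q p' \<and>
     (\<lambda>s. (1/2) * p s + (1/2) * p' s) = (\<lambda>s. (1/2) * q s + (1/2) * q' s) \<and>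
     c q + c' q' \<le> c p + c' p'"
  proof (cases "c p + c' p' = \<infinity>")
    case True
    then have "fosd p p \<and> fosd p' p' \<and>
        (\<lambda>s. (1/2) * p s + (1/2) * p' s) = (\<lambda>s. (1/2) * p' s + (1/2) * p s) \<and> c p' + c' p \<le> c p + c' p'"
      by (auto simp: fosd_def)
    then show ?thesis using p by blast
  next
    case False
    have "0 \<le> c p" "0 \<le> c' p'" using assms(2,3) p by (auto simp: nonneg_cost_def)
    with False obtain A where A: "c p + c' p' = ereal A" by (cases "c p"; cases "c' p'") auto
    obtain q q' where q: "q \<in> prob_simplex" "q' \<in> prob_simplex"
      and balance: "\<And>s. q s + q' s = p s + p' s" and tail: "tail_nonneg (\<lambda>s. q s - p' s)"
      and cost: "c q + c' q' \<le> ereal A"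
      by (rule witness_if_val_increasing_differences[OF assms p A]) (rule that)
    show ?thesis
      unfolding A using q cost up_shift_witness_if_tail_nonneg[OF balance tail] by blast
  qed
qed

theorem lemma2:
  fixes c c' :: "('s::{finite,linorder} \<Rightarrow> real) \<Rightarrow> ereal"
  assumes "nonneg_cost c" "grounded c" "convex_cost c" "lsc_cost c"
      and "nonneg_cost c'" "grounded c'" "convex_cost c'" "lsc_cost c'"
  shows "up_shifted c c' \<longleftrightarrow>
    (\<forall>f f' :: 's \<Rightarrow> real. mono (\<lambda>s. f s - f' s) \<longrightarrow>
       (val c' f \<ge> val c' f' \<longrightarrow> val c f \<ge> val c f') \<and>
       (val c' f > val c' f' \<longrightarrow> val c f > val c f'))"
proof -
  have "up_shifted c c' \<longleftrightarrow> val_increasing_differences c c'"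
    using up_shifted_imp_val_increasing_differences[OF _ assms(1,5,2,6)]
      val_increasing_differences_imp_up_shifted[OF _ assms(1,5,2,6,3,7,4,8)] by blast
  also have "\<dots> \<longleftrightarrow> (\<forall>f f' :: 's \<Rightarrow> real. mono (\<lambda>s. f s - f' s) \<longrightarrow>
       (val c' f \<ge> val c' f' \<longrightarrow> val c f \<ge> val c f') \<and>
       (val c' f > val c' f' \<longrightarrow> val c f > val c f'))"
    by (rule val_increasing_differences_iff[OF assms(1,2,5,6)])
  finally show ?thesis .
qed

end
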